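(* Let $\mathbb{Y},\mathbb{T}$ be sets, let $\underline{\mathsf{P}}_{Y,\Theta}$ be a coherent lower prevision on the bounded gambles on $\mathbb{Y}\times\mathbb{T}$ with conjugate upper prevision $\overline{\mathsf{P}}_{Y,\Theta}$, and let $y\mapsto(\underline{\Pi}_y,\overline{\Pi}_y)$ be an inferential model. Suppose the IM is valid, i.e., $$\overline{\mathsf{P}}_{Y,\Theta}\bigl(\{(y,\theta):\underline{\Pi}_y(H)>1-\alpha,\ \theta\notin H\}\bigr)\le\alpha\quad\text{for all }H\subseteq\mathbb{T},\ \alpha\in[0,1].$$ Then there is no sure-loss relative to the prior assessments: $\inf_{y\in\mathbb{Y}}\underline{\Pi}_y(H)\le\overline{\mathsf{P}}_\Theta(H)$ for all $H\subseteq\mathbb{T}$, where $\overline{\mathsf{P}}_\Theta(H)=\overline{\mathsf{P}}_{Y,\Theta}(\mathbb{Y}\times H)$.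
   Context: A lower prevision $\underline{\mathsf{P}}$ on the linear space of bounded gambles on a set $\Omega$ is coherent if for all integers $m,K\ge0$ and all bounded gambles $f_0,\dots,f_K$, $\sup_{\omega}\bigl[\sum_{k=1}^K\{f_k(\omega)-\underline{\mathsf{P}}(f_k)\}-m\{f_0(\omega)-\underline{\mathsf{P}}(f_0)\}\bigr]\ge0$; its conjugate upper prevision is $\overline{\mathsf{P}}(f)=-\underline{\mathsf{P}}(-f)$, and for a set $B$, $\underline{\mathsf{P}}(B)=\underline{\mathsf{P}}(1_B)$, $\overline{\mathsf{P}}(B)=\overline{\mathsf{P}}(1_B)$. An inferential model (IM) is a map $y\mapsto(\underline{\Pi}_y,\overline{\Pi}_y)$ assigning to each $y\in\mathbb{Y}$ a coherent lower prevision $\underline{\Pi}_y$ (with conjugate upper prevision $\overline{\Pi}_y$) on bounded gambles on $\mathbb{T}$; $\underline{\Pi}_y(H)=\underline{\Pi}_y(1_H)$ for $H\subseteq\mathbb{T}$. *)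

theory Defs
  imports Complex_Main "HOL-Library.Indicator_Function"
begin

definition bounded_gamble :: "('a \<Rightarrow> real) \<Rightarrow> bool" where
  "bounded_gamble f \<longleftrightarrow> (\<exists>B. \<forall>x. \<bar>f x\<bar> \<le> B)"

text \<open>Coherence of a lower prevision (only its values on bounded gambles matter).\<close>
definition coherent_lower_prevision :: "(('a \<Rightarrow> real) \<Rightarrow> real) \<Rightarrow> bool" where
  "coherent_lower_prevision P \<longleftrightarrow>
     (\<forall>(m::nat) (K::nat) (f::nat \<Rightarrow> 'a \<Rightarrow> real).
        (\<forall>k\<le>K. bounded_gamble (f k)) \<longrightarrow>
        0 \<le> (SUP \<omega>. (\<Sum>k=1..K. f k \<omega> - P (f k)) - real m * (f 0 \<omega> - P (f 0))))"

definition upper_prevision :: "(('a \<Rightarrow> real) \<Rightarrow> real) \<Rightarrow> ('a \<Rightarrow> real) \<Rightarrow> real" where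
  "upper_prevision P f = - P (\<lambda>x. - f x)"

definition inferential_model :: "('y \<Rightarrow> ('t \<Rightarrow> real) \<Rightarrow> real) \<Rightarrow> bool" where
  "inferential_model IM \<longleftrightarrow> (\<forall>y. coherent_lower_prevision (IM y))"

definition valid_IM :: "(('y \<times> 't \<Rightarrow> real) \<Rightarrow> real) \<Rightarrow> ('y \<Rightarrow> ('t \<Rightarrow> real) \<Rightarrow> real) \<Rightarrow> bool" where
  "valid_IM P IM \<longleftrightarrow>
     (\<forall>(H::'t set) (\<alpha>::real). 0 \<le> \<alpha> \<and> \<alpha> \<le> 1 \<longrightarrow>
        upper_prevision P (indicator {(y, \<theta>). IM y (indicator H) > 1 - \<alpha> \<and> \<theta> \<notin> H}) \<le> \<alpha>)"

end

theory Submission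
  imports Defs
begin

text \<open>
  If every \<open>\<Pi>\<^sub>y(H)\<close> exceeds \<open>t\<close>, then for \<open>\<alpha> = 1 - t\<close> the event in the validity
  condition is all of \<open>Y \<times> H\<^sup>c\<close>, so validity gives \<open>upper(Y \<times> H\<^sup>c) \<le> 1 - t\<close>.  Coherence
  forces \<open>upper(A) + upper(A\<^sup>c) \<ge> 1\<close>, hence \<open>upper(Y \<times> H) \<ge> t\<close>; letting \<open>t\<close> increase
  to the infimum gives the claim.
\<close>

lemma bounded_gamble_indicator: "bounded_gamble (indicator A :: 'a \<Rightarrow> real)"
  unfolding bounded_gamble_def by (auto intro!: exI[of _ 1] simp: indicator_def)

lemma bounded_gamble_uminus: "bounded_gamble f \<Longrightarrow> bounded_gamble (\<lambda>x. - f x)"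
  unfolding bounded_gamble_def by simp

lemma bounded_gamble_add:
  assumes "bounded_gamble f" "bounded_gamble g"
  shows "bounded_gamble (\<lambda>x. f x + g x)"
proof -
  obtain B C where "\<forall>x. \<bar>f x\<bar> \<le> B" "\<forall>x. \<bar>g x\<bar> \<le> C"
    using assms unfolding bounded_gamble_def by blast
  then have "\<forall>x. \<bar>f x + g x\<bar> \<le> B + C"
    by (meson abs_triangle_ineq add_mono order_trans)
  then show ?thesis unfolding bounded_gamble_def by blast
qed

lemma coherent_lower_previsionD:
  fixes K m :: nat
  assumes "coherent_lower_prevision P"
    and "\<And>k. k \<le> K \<Longrightarrow> bounded_gamble (f k)"
    and "\<And>\<omega>. (\<Sum>k=1..K. f k \<omega> - P (f k)) - real m * (f 0 \<omega> - P (f 0)) \<le> b"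
  shows "0 \<le> b"
proof -
  have "0 \<le> (SUP \<omega>. (\<Sum>k=1..K. f k \<omega> - P (f k)) - real m * (f 0 \<omega> - P (f 0)))"
    using assms(1,2) unfolding coherent_lower_prevision_def by blast
  also have "\<dots> \<le> b"
    by (rule cSUP_least) (use assms(3) in auto)
  finally show ?thesis .
qed

lemma coherent_lower_prevision_le:
  assumes "coherent_lower_prevision P" "bounded_gamble f" "\<And>\<omega>. f \<omega> \<le> b"
  shows "P f \<le> b"
proof -
  have "0 \<le> b - P f"
    by (rule coherent_lower_previsionD[OF assms(1), of 1 "\<lambda>_. f" 0]) (use assms(2,3) in simp_all)
  then show ?thesis by simp
qed

lemma coherent_lower_prevision_ge:
  assumes "coherent_lower_prevision P" "bounded_gamble f" "\<And>\<omega>. b \<le> f \<omega>"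
  shows "b \<le> P f"
proof -
  have "0 \<le> P f - b"
    by (rule coherent_lower_previsionD[OF assms(1), of 0 "\<lambda>_. f" 1]) (use assms(2,3) in simp_all)
  then show ?thesis by simp
qed

lemma coherent_lower_prevision_superadditive:
  assumes "coherent_lower_prevision P" "bounded_gamble f" "bounded_gamble g"
  shows "P f + P g \<le> P (\<lambda>x. f x + g x)"
proof -
  define h where "h k = (if k = 1 then f else if k = 2 then g else (\<lambda>x. f x + g x))" for k :: nat
  have "bounded_gamble (h k)" for k
    unfolding h_def using assms(2,3) bounded_gamble_add by auto
  moreover have "(\<Sum>k=1..2. h k \<omega> - P (h k)) - real 1 * (h 0 \<omega> - P (h 0))
      = P (\<lambda>x. f x + g x) - P f - P g" for \<omega>
    by (simp add: h_def numeral_2_eq_2)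
  ultimately have "0 \<le> P (\<lambda>x. f x + g x) - P f - P g"
    by (intro coherent_lower_previsionD[OF assms(1), of 2 h 1]) simp_all
  then show ?thesis by simp
qed

lemma coherent_lower_prevision_indicator_bounds:
  assumes "coherent_lower_prevision P"
  shows "0 \<le> P (indicator A)" "P (indicator A) \<le> 1"
  by (rule coherent_lower_prevision_ge[OF assms bounded_gamble_indicator], simp)
    (rule coherent_lower_prevision_le[OF assms bounded_gamble_indicator], simp add: indicator_def)

lemma upper_prevision_indicator_nonneg:
  assumes "coherent_lower_prevision P"
  shows "0 \<le> upper_prevision P (indicator A)"
  using coherent_lower_prevision_le[OF assms bounded_gamble_uminus[OF bounded_gamble_indicator],
      of A 0]
  by (simp add: upper_prevision_def)

lemma upper_prevision_indicator_Compl: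
  assumes "coherent_lower_prevision P"
  shows "1 \<le> upper_prevision P (indicator A) + upper_prevision P (indicator (- A))"
proof -
  have "P (\<lambda>x. - indicator A x) + P (\<lambda>x. - indicator (- A) x)
      \<le> P (\<lambda>x. - indicator A x + - indicator (- A) x)"
    by (intro coherent_lower_prevision_superadditive assms bounded_gamble_uminus
        bounded_gamble_indicator)
  also have "(\<lambda>x. - indicator A x + - indicator (- A) x) = (\<lambda>x. - 1 :: real)"
    by (auto simp: indicator_def)
  also have "P (\<lambda>x. - 1) \<le> - 1"
    using assms by (rule coherent_lower_prevision_le)
      (auto simp: bounded_gamble_def intro!: exI[of _ 1])
  finally show ?thesis by (simp add: upper_prevision_def)
qed

lemma valid_IM_upper_prevision_ge:
  assumes "coherent_lower_prevision P" "valid_IM P IM"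
    and "0 \<le> t" "t \<le> 1" "\<And>y. t < IM y (indicator H)"
  shows "t \<le> upper_prevision P (indicator (UNIV \<times> H))"
proof -
  have "0 \<le> 1 - t \<and> 1 - t \<le> 1"
    using assms(3,4) by simp
  with assms(2) have "upper_prevision P
      (indicator {(y, \<theta>). IM y (indicator H) > 1 - (1 - t) \<and> \<theta> \<notin> H}) \<le> 1 - t"
    unfolding valid_IM_def by blast
  also have "{(y, \<theta>). IM y (indicator H) > 1 - (1 - t) \<and> \<theta> \<notin> H} = - (UNIV \<times> H)"
    using assms(5) by auto
  finally show ?thesis
    using upper_prevision_indicator_Compl[OF assms(1), of "UNIV \<times> H"] by linarith
qed

theorem proposition2:
  fixes P :: "('y \<times> 't \<Rightarrow> real) \<Rightarrow> real"
    and IM :: "'y \<Rightarrow> ('t \<Rightarrow> real) \<Rightarrow> real"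
  assumes "coherent_lower_prevision P"
    and "inferential_model IM"
    and "valid_IM P IM"
  shows "\<forall>H :: 't set. (INF y. IM y (indicator H)) \<le> upper_prevision P (indicator (UNIV \<times> H))"
proof
  fix H :: "'t set"
  have IM_bounds: "0 \<le> IM y (indicator H)" "IM y (indicator H) \<le> 1" for y
    using assms(2) coherent_lower_prevision_indicator_bounds
    unfolding inferential_model_def by blast+
  then have INF_le: "(INF y. IM y (indicator H)) \<le> IM y (indicator H)" for y
    by (intro cINF_lower bdd_belowI[of _ 0]) auto
  show "(INF y. IM y (indicator H)) \<le> upper_prevision P (indicator (UNIV \<times> H))"
  proof (rule dense_le)
    fix t assume t_less: "t < (INF y. IM y (indicator H))"
    show "t \<le> upper_prevision P (indicator (UNIV \<times> H))"
    proof (cases "0 \<le> t")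
      case True
      have "t < IM y (indicator H)" for y
        using t_less INF_le[of y] by linarith
      moreover have "t \<le> 1"
        using t_less INF_le[of undefined] IM_bounds(2)[of undefined] by linarith
      ultimately show ?thesis
        using valid_IM_upper_prevision_ge[OF assms(1,3) True] by blast
    next
      case False
      then show ?thesis
        using upper_prevision_indicator_nonneg[OF assms(1), of "UNIV \<times> H"] by linarith
    qed
  qed
qed

end
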